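(* Let $X$ be a set and $B$ a ternary relation on $X$. Then $(X,B)$ is $\mathbf{S}_0$-separated if and only if $B$ satisfies: (1) $B(x,x,y)$ and $B(x,y,y)$ for all $x,y\in X$; (2) $B(u,x,v)\wedge B(u,y,v)\wedge B(x,z,y)\implies B(u,z,v)$ for all $u,v,x,y,z\in X$; (3) $B(x,y,x)\wedge B(y,x,y)\implies x=y$ for all $x,y\in X$. Moreover, if $(X,B)$ is a betweenness structure then for every $a,b\in X$ the set $[a,b]=\{x\in X:B(a,x,b)\}$ is convex.
   Context: $\mathbf{S}_0=(\{0,1\},\beta)$ where $\beta(x,y,z)$ holds iff ($x=z=1\implies y=1$). A structure $(X,B)$ is $\mathbf{S}_0$-separated if it embeds (injective map preserving and reflecting the relation) into some power of $\mathbf{S}_0$; an $\mathbf{S}_0$-separated structure is called a betweenness structure. A subset $G$ of $(X,B)$ is convex if for all $a,b\in G$ and $x\in X$, $B(a,x,b)$ implies $x\in G$. *)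

theory Defs
  imports Main
begin

text \<open>The two-element structure S0 = ({0,1}, beta), with 0,1 rendered as False, True.\<close>
definition beta :: "bool \<Rightarrow> bool \<Rightarrow> bool \<Rightarrow> bool" where
  "beta x y z \<longleftrightarrow> (x \<and> z \<longrightarrow> y)"

text \<open>f is an embedding of (X,B) into the power S0^I (an element of the power is
  a function I -> bool; only its values on I matter).  Injective, preserving and
  reflecting the relation.\<close>
definition S0_embedding :: "'i set \<Rightarrow> ('a \<Rightarrow> 'i \<Rightarrow> bool) \<Rightarrow> 'a set \<Rightarrow> ('a \<Rightarrow> 'a \<Rightarrow> 'a \<Rightarrow> bool) \<Rightarrow> bool" where
  "S0_embedding I f X B \<longleftrightarrow>
     (\<forall>x\<in>X. \<forall>y\<in>X. (\<forall>i\<in>I. f x i = f y i) \<longrightarrow> x = y) \<and>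
     (\<forall>x\<in>X. \<forall>y\<in>X. \<forall>z\<in>X. B x y z \<longleftrightarrow> (\<forall>i\<in>I. beta (f x i) (f y i) (f z i)))"

definition S0_separated_in :: "'i itself \<Rightarrow> 'a set \<Rightarrow> ('a \<Rightarrow> 'a \<Rightarrow> 'a \<Rightarrow> bool) \<Rightarrow> bool" where
  "S0_separated_in _ X B \<longleftrightarrow> (\<exists>(I::'i set) f. S0_embedding I f X B)"

text \<open>Index sets are taken in the
  type 'a set set (large enough: WLOG an index set consists of distinct maps X -> {0,1});
  the main theorem also shows that any index type gives the same notion.\<close>
definition S0_separated :: "'a set \<Rightarrow> ('a \<Rightarrow> 'a \<Rightarrow> 'a \<Rightarrow> bool) \<Rightarrow> bool" where
  "S0_separated X B \<longleftrightarrow> S0_separated_in TYPE('a set set) X B"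

definition convex_in :: "'a set \<Rightarrow> ('a \<Rightarrow> 'a \<Rightarrow> 'a \<Rightarrow> bool) \<Rightarrow> 'a set \<Rightarrow> bool" where
  "convex_in X B G \<longleftrightarrow> G \<subseteq> X \<and> (\<forall>a\<in>G. \<forall>b\<in>G. \<forall>x\<in>X. B a x b \<longrightarrow> x \<in> G)"

end

theory Submission
  imports Defs
begin

text \<open>An embedding into a power of S0 transfers to (X,B) every universal Horn condition that
  holds in S0 coordinatewise.  Conversely the characteristic functions of the convex sets
  embed (X,B) into a power of S0: convexity makes them preserve B, and the interval
  [x,z], which contains x and z by axiom (1) and is convex by axiom (2), shows that they
  reflect B; injectivity then follows from axiom (3).\<close>

definition betweenness_axioms :: "'a set \<Rightarrow> ('a \<Rightarrow> 'a \<Rightarrow> 'a \<Rightarrow> bool) \<Rightarrow> bool" where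
  "betweenness_axioms X B \<longleftrightarrow>
     (\<forall>x\<in>X. \<forall>y\<in>X. B x x y \<and> B x y y) \<and>
     (\<forall>u\<in>X. \<forall>v\<in>X. \<forall>x\<in>X. \<forall>y\<in>X. \<forall>z\<in>X. B u x v \<and> B u y v \<and> B x z y \<longrightarrow> B u z v) \<and>
     (\<forall>x\<in>X. \<forall>y\<in>X. B x y x \<and> B y x y \<longrightarrow> x = y)"

lemma beta_left_right [simp]: "beta x x y" "beta x y y"
  by (simp_all add: beta_def)

lemma beta_convex: "beta u x v \<Longrightarrow> beta u y v \<Longrightarrow> beta x z y \<Longrightarrow> beta u z v"
  by (auto simp: beta_def)

lemma beta_antisym: "beta x y x \<Longrightarrow> beta y x y \<Longrightarrow> x = y"
  by (auto simp: beta_def)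

lemma S0_embeddingD:
  assumes "S0_embedding I f X B"
  shows S0_embedding_inj: "\<lbrakk>x \<in> X; y \<in> X; \<forall>i\<in>I. f x i = f y i\<rbrakk> \<Longrightarrow> x = y"
    and S0_embedding_rel: "\<lbrakk>x \<in> X; y \<in> X; z \<in> X\<rbrakk> \<Longrightarrow>
          B x y z \<longleftrightarrow> (\<forall>i\<in>I. beta (f x i) (f y i) (f z i))"
  using assms by (auto simp: S0_embedding_def)

lemma betweenness_axioms_if_S0_embedding:
  assumes emb: "S0_embedding I f X B"
  shows "betweenness_axioms X B"
  unfolding betweenness_axioms_def
proof (intro conjI ballI impI)
  fix x y assume "x \<in> X" "y \<in> X"
  then show "B x x y" "B x y y"
    by (simp_all add: S0_embedding_rel[OF emb])
next
  fix u v x y z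
  assume "u \<in> X" "v \<in> X" "x \<in> X" "y \<in> X" "z \<in> X" "B u x v \<and> B u y v \<and> B x z y"
  then show "B u z v"
    by (auto simp: S0_embedding_rel[OF emb] intro: beta_convex)
next
  fix x y assume xy: "x \<in> X" "y \<in> X" "B x y x \<and> B y x y"
  then have "\<forall>i\<in>I. beta (f x i) (f y i) (f x i) \<and> beta (f y i) (f x i) (f y i)"
    by (simp add: S0_embedding_rel[OF emb])
  then have "\<forall>i\<in>I. f x i = f y i"
    using beta_antisym by blast
  with xy show "x = y"
    by (blast intro: S0_embedding_inj[OF emb])
qed

lemma betweenness_axioms_if_S0_separated_in:
  "S0_separated_in TYPE('i) X B \<Longrightarrow> betweenness_axioms X B"
  unfolding S0_separated_in_def by (blast intro: betweenness_axioms_if_S0_embedding)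

lemma convex_interval:
  assumes "betweenness_axioms X B" "a \<in> X" "b \<in> X"
  shows "convex_in X B {x\<in>X. B a x b}"
  using assms unfolding convex_in_def betweenness_axioms_def by blast

text \<open>The index type of S0_separated is 'a set set, so each convex set C is represented
  by the singleton {C}.\<close>

definition convex_indices :: "'a set \<Rightarrow> ('a \<Rightarrow> 'a \<Rightarrow> 'a \<Rightarrow> bool) \<Rightarrow> 'a set set set" where
  "convex_indices X B = {{C} | C. convex_in X B C}"

lemma S0_embedding_convex_indices:
  assumes ax: "betweenness_axioms X B"
  shows "S0_embedding (convex_indices X B) (\<lambda>x i. x \<in> \<Union>i) X B"
proof -
  have rel: "B x y z \<longleftrightarrow> (\<forall>i\<in>convex_indices X B. beta (x \<in> \<Union>i) (y \<in> \<Union>i) (z \<in> \<Union>i))"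
    if "x \<in> X" "y \<in> X" "z \<in> X" for x y z
  proof
    assume "B x y z"
    show "\<forall>i\<in>convex_indices X B. beta (x \<in> \<Union>i) (y \<in> \<Union>i) (z \<in> \<Union>i)"
    proof
      fix i assume "i \<in> convex_indices X B"
      then obtain C where "i = {C}" "convex_in X B C"
        by (auto simp: convex_indices_def)
      with \<open>B x y z\<close> that show "beta (x \<in> \<Union>i) (y \<in> \<Union>i) (z \<in> \<Union>i)"
        unfolding convex_in_def beta_def by blast
    qed
  next
    assume sep: "\<forall>i\<in>convex_indices X B. beta (x \<in> \<Union>i) (y \<in> \<Union>i) (z \<in> \<Union>i)"
    have "{{w\<in>X. B x w z}} \<in> convex_indices X B"
      using convex_interval[OF ax] that by (auto simp: convex_indices_def)
    with sep have "beta (x \<in> {w\<in>X. B x w z}) (y \<in> {w\<in>X. B x w z}) (z \<in> {w\<in>X. B x w z})"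
      by fastforce
    moreover have "B x x z" "B x z z"
      using ax that by (simp_all add: betweenness_axioms_def)
    ultimately show "B x y z"
      using that by (simp add: beta_def)
  qed
  have inj: "x = y" if "x \<in> X" "y \<in> X" "\<forall>i\<in>convex_indices X B. (x \<in> \<Union>i) = (y \<in> \<Union>i)" for x y
  proof -
    from that(3) have "\<forall>i\<in>convex_indices X B. beta (x \<in> \<Union>i) (y \<in> \<Union>i) (x \<in> \<Union>i)"
      "\<forall>i\<in>convex_indices X B. beta (y \<in> \<Union>i) (x \<in> \<Union>i) (y \<in> \<Union>i)"
      by (simp_all add: beta_def)
    then have "B x y x" "B y x y"
      by (simp_all only: rel[OF that(1,2,1)] rel[OF that(2,1,2)])
    with ax that(1,2) show "x = y"
      unfolding betweenness_axioms_def by blast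
  qed
  show ?thesis
    unfolding S0_embedding_def
  proof (intro conjI ballI impI)
    show "x = y" if "x \<in> X" "y \<in> X" "\<forall>i\<in>convex_indices X B. (x \<in> \<Union>i) = (y \<in> \<Union>i)"
      for x y using inj that .
    show "B x y z \<longleftrightarrow> (\<forall>i\<in>convex_indices X B. beta (x \<in> \<Union>i) (y \<in> \<Union>i) (z \<in> \<Union>i))"
      if "x \<in> X" "y \<in> X" "z \<in> X" for x y z using rel that .
  qed
qed

lemma S0_separated_if_betweenness_axioms:
  "betweenness_axioms X B \<Longrightarrow> S0_separated X B"
  unfolding S0_separated_def S0_separated_in_def
  by (rule exI, rule exI, rule S0_embedding_convex_indices)

lemma S0_separated_iff_betweenness_axioms:
  "S0_separated X B \<longleftrightarrow> betweenness_axioms X B"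
proof
  show "S0_separated X B \<Longrightarrow> betweenness_axioms X B"
    unfolding S0_separated_def by (rule betweenness_axioms_if_S0_separated_in)
qed (rule S0_separated_if_betweenness_axioms)

theorem mainTheorem16:
  fixes X :: "'a set" and B :: "'a \<Rightarrow> 'a \<Rightarrow> 'a \<Rightarrow> bool"
  shows "(S0_separated X B \<longleftrightarrow>
           ((\<forall>x\<in>X. \<forall>y\<in>X. B x x y \<and> B x y y) \<and>
            (\<forall>u\<in>X. \<forall>v\<in>X. \<forall>x\<in>X. \<forall>y\<in>X. \<forall>z\<in>X.
                B u x v \<and> B u y v \<and> B x z y \<longrightarrow> B u z v) \<and>
            (\<forall>x\<in>X. \<forall>y\<in>X. B x y x \<and> B y x y \<longrightarrow> x = y)))
       \<and> (S0_separated_in TYPE('i) X B \<longrightarrow> S0_separated X B)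
       \<and> (S0_separated X B \<longrightarrow> (\<forall>a\<in>X. \<forall>b\<in>X. convex_in X B {x\<in>X. B a x b}))"
proof -
  have "S0_separated_in TYPE('i) X B \<longrightarrow> S0_separated X B"
    using betweenness_axioms_if_S0_separated_in S0_separated_if_betweenness_axioms by iprover
  moreover have "S0_separated X B \<longrightarrow> (\<forall>a\<in>X. \<forall>b\<in>X. convex_in X B {x\<in>X. B a x b})"
    by (simp add: S0_separated_iff_betweenness_axioms convex_interval)
  ultimately show ?thesis
    unfolding S0_separated_iff_betweenness_axioms betweenness_axioms_def by iprover
qed

end
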